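(* Let $c_1<0$, $c_2,c_3\in\mathbb{R}$ and define $p(a,x)=c_1a+c_2x+c_3$ for $a\in\{0,1\}$, $x\in\mathbb{R}$. Consider two patient classes $i=1,2$: in class $i$ the feature $x$ is distributed as $\mathcal N(\mu_i,\sigma_i^2)$ with density $f_i$, and for weeks $h=1,\dots,4$ there are numbers $\alpha_i^h$ (the proportion of class-$i$ readmissions occurring in week $h$) such that the class-$i$ week-$h$ readmission risk is $p_i^h(a,x)=\alpha_i^h\,p(a,x)$. (i) For each $i$, $p_i^h(a,x)=c^h_{1,i}a+c^h_{2,i}x+c^h_{3,i}$ with $c^h_{j,i}=\alpha_i^hc_j$, $j=1,2,3$. (ii) Let the population be a mixture of the two classes with probabilities $q_1,q_2\in(0,1)$, $q_1+q_2=1$, and define the mixture week-$h$ risk $p^h(a,x)=\sum_{i=1}^2\frac{q_if_i(x)}{q_1f_1(x)+q_2f_2(x)}\,p_i^h(a,x)$. If $\alpha_1^h\neq\alpha_2^h$ and the feature distributions of the two classes are different, then $p^h(a,x)$ is not a linear (affine) function of $(a,x)$. *)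

theory Defs
  imports "HOL-Probability.Probability"
begin

definition base_risk :: "real \<Rightarrow> real \<Rightarrow> real \<Rightarrow> real \<Rightarrow> real \<Rightarrow> real" where
  "base_risk c1 c2 c3 a x = c1 * a + c2 * x + c3"

definition class_risk ::
  "(nat \<Rightarrow> nat \<Rightarrow> real) \<Rightarrow> nat \<Rightarrow> nat \<Rightarrow> real \<Rightarrow> real \<Rightarrow> real \<Rightarrow> real \<Rightarrow> real \<Rightarrow> real" where
  "class_risk \<alpha> i h c1 c2 c3 a x = \<alpha> i h * base_risk c1 c2 c3 a x"

definition mix_risk ::
  "(nat \<Rightarrow> real) \<Rightarrow> (nat \<Rightarrow> real) \<Rightarrow> (nat \<Rightarrow> real) \<Rightarrow> (nat \<Rightarrow> nat \<Rightarrow> real) \<Rightarrow> nat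
     \<Rightarrow> real \<Rightarrow> real \<Rightarrow> real \<Rightarrow> real \<Rightarrow> real \<Rightarrow> real" where
  "mix_risk q \<mu> \<sigma> \<alpha> h c1 c2 c3 a x =
     (\<Sum>i\<in>{1,2}. q i * normal_density (\<mu> i) (\<sigma> i) x
                  / (\<Sum>j\<in>{1,2}. q j * normal_density (\<mu> j) (\<sigma> j) x)
                  * class_risk \<alpha> i h c1 c2 c3 a x)"

end

theory Submission
  imports Defs
begin

text \<open>
  The mixture risk is the base risk times the posterior-weighted average
  \<open>\<alpha>\<^sub>2 + (\<alpha>\<^sub>1 - \<alpha>\<^sub>2) \<pi>\<^sub>1(x)\<close> of the class factors, where \<open>\<pi>\<^sub>1\<close> is the posterior probability of
  class 1. Since \<open>c\<^sub>1 \<noteq> 0\<close>, the coefficient of \<open>a\<close> in an affine mixture risk is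
  that weight times \<open>c\<^sub>1\<close>, so the weight, and with \<open>\<alpha>\<^sub>1 \<noteq> \<alpha>\<^sub>2\<close> the posterior, would
  be constant in \<open>x\<close>. Then \<open>f\<^sub>1/f\<^sub>2\<close> is constant, i.e. the difference of the two
  Gaussian exponents is constant, a polynomial identity in \<open>x\<close> that forces equal
  means and variances.
\<close>

definition class_posterior :: "(nat \<Rightarrow> real) \<Rightarrow> (nat \<Rightarrow> real) \<Rightarrow> (nat \<Rightarrow> real) \<Rightarrow> nat \<Rightarrow> real \<Rightarrow> real"
  where "class_posterior q \<mu> \<sigma> i x =
    q i * normal_density (\<mu> i) (\<sigma> i) x / (\<Sum>j\<in>{1,2}. q j * normal_density (\<mu> j) (\<sigma> j) x)"

lemma normal_density_eq_times_exp:
  "normal_density \<mu> \<sigma> x = normal_density \<mu> \<sigma> 0 * exp ((2 * \<mu> * x - x\<^sup>2) / (2 * \<sigma>\<^sup>2))"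
proof -
  have "-(x - \<mu>)\<^sup>2 / (2 * \<sigma>\<^sup>2) = -(0 - \<mu>)\<^sup>2 / (2 * \<sigma>\<^sup>2) + (2 * \<mu> * x - x\<^sup>2) / (2 * \<sigma>\<^sup>2)"
    by (simp add: add_divide_distrib [symmetric] power2_eq_square algebra_simps)
  then have "exp (-(x - \<mu>)\<^sup>2 / (2 * \<sigma>\<^sup>2))
      = exp (-(0 - \<mu>)\<^sup>2 / (2 * \<sigma>\<^sup>2)) * exp ((2 * \<mu> * x - x\<^sup>2) / (2 * \<sigma>\<^sup>2))"
    by (simp only: exp_add [symmetric])
  then show ?thesis
    by (simp only: normal_density_def mult.assoc)
qed

lemma normal_density_proportional_imp_eq:
  assumes "\<sigma>\<^sub>1 > 0" and "\<sigma>\<^sub>2 > 0"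
    and proportional: "\<And>x. normal_density \<mu>\<^sub>1 \<sigma>\<^sub>1 x * normal_density \<mu>\<^sub>2 \<sigma>\<^sub>2 0
                          = normal_density \<mu>\<^sub>1 \<sigma>\<^sub>1 0 * normal_density \<mu>\<^sub>2 \<sigma>\<^sub>2 x"
  shows "\<mu>\<^sub>1 = \<mu>\<^sub>2 \<and> \<sigma>\<^sub>1 = \<sigma>\<^sub>2"
proof -
  define t\<^sub>1 t\<^sub>2 where "t\<^sub>1 = 2 * \<sigma>\<^sub>1\<^sup>2" and "t\<^sub>2 = 2 * \<sigma>\<^sub>2\<^sup>2"
  have t_pos: "t\<^sub>1 > 0" "t\<^sub>2 > 0"
    using assms(1,2) by (simp_all add: t\<^sub>1_def t\<^sub>2_def)
  have exponents: "(2 * \<mu>\<^sub>1 * x - x\<^sup>2) / t\<^sub>1 = (2 * \<mu>\<^sub>2 * x - x\<^sup>2) / t\<^sub>2" for x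
  proof -
    let ?c = "normal_density \<mu>\<^sub>1 \<sigma>\<^sub>1 0 * normal_density \<mu>\<^sub>2 \<sigma>\<^sub>2 0"
    have "?c > 0"
      using assms(1,2) by (simp add: normal_density_pos)
    moreover have "?c * exp ((2 * \<mu>\<^sub>1 * x - x\<^sup>2) / t\<^sub>1) = ?c * exp ((2 * \<mu>\<^sub>2 * x - x\<^sup>2) / t\<^sub>2)"
      using proportional[of x]
      by (simp only: normal_density_eq_times_exp [of \<mu>\<^sub>1 \<sigma>\<^sub>1 x] normal_density_eq_times_exp [of \<mu>\<^sub>2 \<sigma>\<^sub>2 x]
          t\<^sub>1_def t\<^sub>2_def mult_ac)
    ultimately show ?thesis
      by auto
  qed
  have "(2 * \<mu>\<^sub>1 - 1) * t\<^sub>2 = (2 * \<mu>\<^sub>2 - 1) * t\<^sub>1" "(- 2 * \<mu>\<^sub>1 - 1) * t\<^sub>2 = (- 2 * \<mu>\<^sub>2 - 1) * t\<^sub>1"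
    using exponents[of 1] exponents[of "-1"] t_pos by (simp_all add: field_simps)
  then have "t\<^sub>1 = t\<^sub>2" and "\<mu>\<^sub>1 * t\<^sub>2 = \<mu>\<^sub>2 * t\<^sub>1"
    by (simp_all add: algebra_simps)
  with t_pos assms(1,2) show ?thesis
    by (simp add: t\<^sub>1_def t\<^sub>2_def)
qed

lemma class_posterior_sum_eq_1:
  assumes "\<sigma> 1 > 0" and "\<sigma> 2 > 0" and "q 1 > 0" and "q 2 > 0"
  shows "class_posterior q \<mu> \<sigma> 1 x + class_posterior q \<mu> \<sigma> 2 x = 1"
proof -
  have "q 1 * normal_density (\<mu> 1) (\<sigma> 1) x + q 2 * normal_density (\<mu> 2) (\<sigma> 2) x > 0"
    using assms by (simp add: normal_density_pos add_pos_pos)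
  then show ?thesis
    by (simp add: class_posterior_def add_divide_distrib [symmetric])
qed

lemma mix_risk_eq_posterior_weight:
  assumes "\<sigma> 1 > 0" and "\<sigma> 2 > 0" and "q 1 > 0" and "q 2 > 0"
  shows "mix_risk q \<mu> \<sigma> \<alpha> h c1 c2 c3 a x
     = (\<alpha> 2 h + (\<alpha> 1 h - \<alpha> 2 h) * class_posterior q \<mu> \<sigma> 1 x) * base_risk c1 c2 c3 a x"
proof -
  have posterior_2: "class_posterior q \<mu> \<sigma> 2 x = 1 - class_posterior q \<mu> \<sigma> 1 x"
    using class_posterior_sum_eq_1 [OF assms, of \<mu> x] by linarith
  have "mix_risk q \<mu> \<sigma> \<alpha> h c1 c2 c3 a x
      = (class_posterior q \<mu> \<sigma> 1 x * \<alpha> 1 h + class_posterior q \<mu> \<sigma> 2 x * \<alpha> 2 h) * base_risk c1 c2 c3 a x"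
    by (simp add: mix_risk_def class_posterior_def class_risk_def algebra_simps)
  then show ?thesis
    unfolding posterior_2 by (simp add: algebra_simps)
qed

lemma mixture_weight_eq_imp_cross_eq:
  fixes p q u v u' v' :: real
  assumes "p > 0" and "q > 0" and "u > 0" and "v > 0" and "u' > 0" and "v' > 0"
    and "p * u / (p * u + q * v) = p * u' / (p * u' + q * v')"
  shows "u * v' = u' * v"
proof -
  have "p * u + q * v > 0" and "p * u' + q * v' > 0"
    using assms(1-6) by (simp_all add: add_pos_pos)
  with assms(7) have "p * u * (p * u' + q * v') = p * u' * (p * u + q * v)"
    by (simp add: frac_eq_eq)
  then have "(p * q) * (u * v') = (p * q) * (u' * v)"
    by (simp add: algebra_simps)
  with assms(1,2) show ?thesis
    by simp
qed

lemma class_posterior_eq_imp_proportional: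
  assumes "\<sigma> 1 > 0" and "\<sigma> 2 > 0" and "q 1 > 0" and "q 2 > 0"
    and "class_posterior q \<mu> \<sigma> 1 x = class_posterior q \<mu> \<sigma> 1 y"
  shows "normal_density (\<mu> 1) (\<sigma> 1) x * normal_density (\<mu> 2) (\<sigma> 2) y
       = normal_density (\<mu> 1) (\<sigma> 1) y * normal_density (\<mu> 2) (\<sigma> 2) x"
  using assms(5) mixture_weight_eq_imp_cross_eq [OF assms(3,4)] assms(1,2)
  by (simp add: class_posterior_def normal_density_pos)

lemma affine_in_treatment_imp_constant_factor:
  fixes W :: "real \<Rightarrow> real"
  assumes "c1 \<noteq> 0"
    and affine: "\<forall>a\<in>{0,1}. \<forall>x. W x * base_risk c1 c2 c3 a x = b1 * a + b2 * x + b3"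
  shows "W x = W y"
proof -
  have "W z * c1 = b1" for z
    using affine by (force simp: base_risk_def algebra_simps)
  then show ?thesis
    using assms(1) by (metis mult_right_cancel)
qed

theorem proposition2:
  fixes c1 c2 c3 :: real and q \<mu> \<sigma> :: "nat \<Rightarrow> real" and \<alpha> :: "nat \<Rightarrow> nat \<Rightarrow> real"
  assumes "c1 < 0"
    and "\<sigma> 1 > 0" and "\<sigma> 2 > 0"
    and "0 < q 1" and "q 1 < 1" and "0 < q 2" and "q 2 < 1" and "q 1 + q 2 = 1"
  shows "(\<forall>i\<in>{1,2}. \<forall>h\<in>{1..4}. \<forall>a\<in>{0,1}. \<forall>x.
            class_risk \<alpha> i h c1 c2 c3 a x = (\<alpha> i h * c1) * a + (\<alpha> i h * c2) * x + \<alpha> i h * c3)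
       \<and> (\<forall>h\<in>{1..4}. \<alpha> 1 h \<noteq> \<alpha> 2 h \<and> (\<mu> 1, \<sigma> 1) \<noteq> (\<mu> 2, \<sigma> 2) \<longrightarrow>
            \<not> (\<exists>b1 b2 b3. \<forall>a\<in>{0,1}. \<forall>x.
                  mix_risk q \<mu> \<sigma> \<alpha> h c1 c2 c3 a x = b1 * a + b2 * x + b3))"
proof (intro conjI ballI allI impI notI)
  fix i h a x
  show "class_risk \<alpha> i h c1 c2 c3 a x = (\<alpha> i h * c1) * a + (\<alpha> i h * c2) * x + \<alpha> i h * c3"
    by (simp add: class_risk_def base_risk_def algebra_simps)
next
  fix h
  assume distinct: "\<alpha> 1 h \<noteq> \<alpha> 2 h \<and> (\<mu> 1, \<sigma> 1) \<noteq> (\<mu> 2, \<sigma> 2)"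
    and "\<exists>b1 b2 b3. \<forall>a\<in>{0,1}. \<forall>x. mix_risk q \<mu> \<sigma> \<alpha> h c1 c2 c3 a x = b1 * a + b2 * x + b3"
  then obtain b1 b2 b3
    where affine: "\<forall>a\<in>{0,1}. \<forall>x. mix_risk q \<mu> \<sigma> \<alpha> h c1 c2 c3 a x = b1 * a + b2 * x + b3"
    by blast
  define \<pi> where "\<pi> = class_posterior q \<mu> \<sigma> 1"
  have "\<forall>a\<in>{0,1}. \<forall>x. (\<alpha> 2 h + (\<alpha> 1 h - \<alpha> 2 h) * \<pi> x) * base_risk c1 c2 c3 a x = b1 * a + b2 * x + b3"
    using affine by (simp only: mix_risk_eq_posterior_weight [OF assms(2,3,4,6)] \<pi>_def)
  then have "\<alpha> 2 h + (\<alpha> 1 h - \<alpha> 2 h) * \<pi> x = \<alpha> 2 h + (\<alpha> 1 h - \<alpha> 2 h) * \<pi> 0" for x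
    using assms(1) by (intro affine_in_treatment_imp_constant_factor [of c1]) simp_all
  with distinct have "\<pi> x = \<pi> 0" for x
    by simp
  then have "normal_density (\<mu> 1) (\<sigma> 1) x * normal_density (\<mu> 2) (\<sigma> 2) 0
           = normal_density (\<mu> 1) (\<sigma> 1) 0 * normal_density (\<mu> 2) (\<sigma> 2) x" for x
    using class_posterior_eq_imp_proportional assms(2,3,4,6) by (simp add: \<pi>_def)
  with normal_density_proportional_imp_eq[OF assms(2,3)] distinct show False
    by blast
qed

end
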